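(* Let $G$ be a connected graph with vertex set $\{v_1,\dots,v_n\}$, $n\ge 2$, let $\widehat{G}$ be the graph constructed from $G$ as described in the context, and let $h\geq 4$. Then $\widehat{G}\in[h,2,1]\setminus[h-1,2,1]$ if and only if $\chi(G)=h$.
   Context: Construction of $\widehat{G}$: let $T$ be the star with center $q$ and leaves $y_1,\dots,y_n$. Let $\mathcal{P}$ be the family of paths of $T$ consisting of: for each $1\le i\le n$ a one-vertex path $P_i$ with $V(P_i)=\{y_i\}$; for each $1\le i<j\le n$ with $v_iv_j\in E(G)$ a path $P_{ij}$ with $V(P_{ij})=\{y_i,q,y_j\}$; for each $i$ with $d_G(v_i)=1$ a path $P_{iq}$ with $V(P_{iq})=\{q,y_i\}$. $\widehat{G}$ is the vertex-intersection graph of $\mathcal{P}$. $[h,2,1]$ denotes the class of graphs that are vertex-intersection graphs of a family of paths in a tree of maximum degree at most $h$ (i.e., two vertices adjacent iff their paths share at least one vertex). $\chi$ denotes chromatic number. *)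

theory Defs
  imports Main
begin

definition simple_graph :: "'a set \<Rightarrow> ('a \<Rightarrow> 'a \<Rightarrow> bool) \<Rightarrow> bool" where
  "simple_graph V E \<longleftrightarrow> finite V \<and> (\<forall>u v. E u v \<longrightarrow> u \<in> V \<and> v \<in> V)
     \<and> (\<forall>u v. E u v \<longrightarrow> E v u) \<and> (\<forall>v. \<not> E v v)"

definition connected_graph :: "'a set \<Rightarrow> ('a \<Rightarrow> 'a \<Rightarrow> bool) \<Rightarrow> bool" where
  "connected_graph V E \<longleftrightarrow> (\<forall>u\<in>V. \<forall>v\<in>V. (\<lambda>x y. E x y \<and> x \<in> V \<and> y \<in> V)\<^sup>*\<^sup>* u v)"

definition degree :: "'a set \<Rightarrow> ('a \<Rightarrow> 'a \<Rightarrow> bool) \<Rightarrow> 'a \<Rightarrow> nat" where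
  "degree V E v = card {u \<in> V. E v u}"

definition chromatic_number :: "'a set \<Rightarrow> ('a \<Rightarrow> 'a \<Rightarrow> bool) \<Rightarrow> nat" where
  "chromatic_number V E = (LEAST k. \<exists>c :: 'a \<Rightarrow> nat.
       (\<forall>v\<in>V. c v < k) \<and> (\<forall>u\<in>V. \<forall>v\<in>V. E u v \<longrightarrow> c u \<noteq> c v))"

definition is_walk :: "'a set \<Rightarrow> ('a \<Rightarrow> 'a \<Rightarrow> bool) \<Rightarrow> 'a list \<Rightarrow> bool" where
  "is_walk V E xs \<longleftrightarrow> xs \<noteq> [] \<and> set xs \<subseteq> V \<and>
     (\<forall>i. Suc i < length xs \<longrightarrow> E (xs ! i) (xs ! Suc i))"

definition has_cycle :: "'a set \<Rightarrow> ('a \<Rightarrow> 'a \<Rightarrow> bool) \<Rightarrow> bool" where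
  "has_cycle V E \<longleftrightarrow> (\<exists>xs. length xs \<ge> 3 \<and> distinct xs \<and> is_walk V E xs \<and> E (last xs) (hd xs))"

definition is_tree :: "'a set \<Rightarrow> ('a \<Rightarrow> 'a \<Rightarrow> bool) \<Rightarrow> bool" where
  "is_tree V E \<longleftrightarrow> simple_graph V E \<and> V \<noteq> {} \<and> connected_graph V E \<and> \<not> has_cycle V E"

definition is_path_set :: "'a set \<Rightarrow> ('a \<Rightarrow> 'a \<Rightarrow> bool) \<Rightarrow> 'a set \<Rightarrow> bool" where
  "is_path_set V E P \<longleftrightarrow> (\<exists>xs. distinct xs \<and> is_walk V E xs \<and> P = set xs)"

definition in_VPT_class :: "nat \<Rightarrow> 'a set \<Rightarrow> ('a \<Rightarrow> 'a \<Rightarrow> bool) \<Rightarrow> bool" where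
  "in_VPT_class h V adj \<longleftrightarrow> (\<exists>(TV :: nat set) TE (p :: 'a \<Rightarrow> nat set).
      is_tree TV TE \<and> (\<forall>v\<in>TV. degree TV TE v \<le> h) \<and>
      (\<forall>x\<in>V. is_path_set TV TE (p x)) \<and>
      (\<forall>x\<in>V. \<forall>y\<in>V. x \<noteq> y \<longrightarrow> (adj x y \<longleftrightarrow> p x \<inter> p y \<noteq> {})))"

text \<open>G has vertices 0..n-1 (v_1..v_n). Star T: centre q = None, leaves y_i = Some i.\<close>
datatype hat_vertex = HP nat | HPE nat nat | HPQ nat

fun hat_path :: "hat_vertex \<Rightarrow> nat option set" where
  "hat_path (HP i) = {Some i}"
| "hat_path (HPE i j) = {Some i, None, Some j}"
| "hat_path (HPQ i) = {None, Some i}"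

definition hat_V :: "nat \<Rightarrow> (nat \<Rightarrow> nat \<Rightarrow> bool) \<Rightarrow> hat_vertex set" where
  "hat_V n E = HP ` {..<n} \<union> {HPE i j | i j. i < j \<and> j < n \<and> E i j}
      \<union> {HPQ i | i. i < n \<and> degree {..<n} E i = 1}"

definition hat_adj :: "hat_vertex \<Rightarrow> hat_vertex \<Rightarrow> bool" where
  "hat_adj x y \<longleftrightarrow> x \<noteq> y \<and> hat_path x \<inter> hat_path y \<noteq> {}"

end

theory Submission
  imports Defs
begin

(*
  Write \<chi> for the chromatic number of G.  The theorem follows from two bounds
  valid for every k \<ge> 3:
    (upper)  if G-hat is a path intersection graph in a tree of maximum degree \<le> k, then \<chi> \<le> k;
    (lower)  if \<chi> \<le> k, then G-hat is such a graph.
  For h \<ge> 4 both apply to h and h - 1, which gives the equivalence.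

  The upper bound rests on the geometry of trees: vertex sets of paths are convex (they contain
  the unique path between any two of their points), convex sets have the Helly property, and a
  convex set has a gate seen from any vertex.  All non-singleton paths of G-hat meet pairwise
  (they share the centre of the star), so by Helly they share a host vertex z; the gate of the
  path of v_i as seen from z determines a neighbour of z, and adjacent vertices of G are sent to
  different neighbours, so the degree of z bounds \<chi>.
  The lower bound is a construction: from a proper colouring with colours < k we build a tree
  with a root, one spine of length n per colour, and a leaf for every vertex of G attached to the
  spine of its colour; the path of v_i is its leaf, and the path of an edge runs between the two
  leaves through the root.
*)

lemma is_walk_iff_successively:
  "is_walk V E xs \<longleftrightarrow> xs \<noteq> [] \<and> set xs \<subseteq> V \<and> successively E xs"
  unfolding is_walk_def successively_conv_nth by blast

lemma successively_prefix: "successively R (as @ bs) \<Longrightarrow> successively R as"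
  by (simp add: successively_append_iff)

lemma successively_glue:
  "successively R (as @ [w]) \<Longrightarrow> successively R (w # bs) \<Longrightarrow> successively R (as @ w # bs)"
  by (auto simp: successively_append_iff successively_Cons)

section \<open>Paths, convexity and the Helly property in trees\<close>

locale tree =
  fixes V :: "'a set" and E :: "'a \<Rightarrow> 'a \<Rightarrow> bool"
  assumes is_tree: "is_tree V E"
begin

lemma edge_sym: "E u v \<Longrightarrow> E v u"
  and edge_in_V: "E u v \<Longrightarrow> u \<in> V" "E u v \<Longrightarrow> v \<in> V"
  and finite_V: "finite V"
  using is_tree unfolding is_tree_def simple_graph_def by blast+

lemma tree_acyclic: "\<not> has_cycle V E"
  and tree_connected: "connected_graph V E"
  using is_tree unfolding is_tree_def by blast+

definition tpath :: "'a list \<Rightarrow> bool" where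
  "tpath xs \<longleftrightarrow> distinct xs \<and> xs \<noteq> [] \<and> set xs \<subseteq> V \<and> successively E xs"

lemma tpath_iff_walk: "tpath xs \<longleftrightarrow> distinct xs \<and> is_walk V E xs"
  unfolding tpath_def is_walk_iff_successively by blast

lemma tpath_nonempty: "tpath xs \<Longrightarrow> xs \<noteq> []"
  and tpath_set: "tpath xs \<Longrightarrow> set xs \<subseteq> V"
  by (simp_all add: tpath_def)

lemma successively_rev_iff: "successively E (rev xs) \<longleftrightarrow> successively E xs"
proof -
  have "successively (\<lambda>x y. E y x) xs = successively E xs"
    by (rule successively_cong) (auto intro: edge_sym)
  then show ?thesis by simp
qed

lemma tpath_rev: "tpath (rev xs) \<longleftrightarrow> tpath xs"
  unfolding tpath_def by (simp del: successively_rev add: successively_rev_iff)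

lemma tpath_prefix: "tpath (xs @ ys) \<Longrightarrow> xs \<noteq> [] \<Longrightarrow> tpath xs"
  unfolding tpath_def using successively_prefix by auto

lemma two_routes_cycle:
  assumes "tpath (x # us @ [w])" "tpath (x # vs @ [w])" "set us \<inter> set vs = {}"
    and "us \<noteq> [] \<or> vs \<noteq> []"
  shows "has_cycle V E"
proof -
  define cyc where "cyc = x # us @ w # rev vs"
  have "distinct (x # us @ [w])" "distinct (x # vs @ [w])"
    using assms(1,2) by (simp_all only: tpath_def)
  then have "distinct cyc" unfolding cyc_def using assms(3) by auto
  moreover have "length cyc \<ge> 3" unfolding cyc_def using assms(4) by (cases us; cases vs) auto
  moreover have "set cyc \<subseteq> V" unfolding cyc_def using tpath_set[OF assms(1)] tpath_set[OF assms(2)]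
    by auto
  moreover have closed: "successively E (cyc @ [x])"
  proof -
    have route1: "successively E ((x # us) @ [w])" using assms(1) by (simp add: tpath_def)
    have "successively E ((x # vs) @ [w])" using assms(2) by (simp add: tpath_def)
    then have "successively E (w # rev vs @ [x])"
      using successively_rev_iff[of "(x # vs) @ [w]"] by simp
    then show ?thesis unfolding cyc_def using successively_glue[OF route1] by simp
  qed
  moreover have "successively E cyc" using successively_prefix[OF closed] .
  moreover have "E (last cyc) (hd cyc)"
    using closed unfolding successively_append_iff by (simp add: cyc_def)
  ultimately show "has_cycle V E"
    unfolding has_cycle_def is_walk_iff_successively
    by (intro exI[of _ cyc]) (auto simp: cyc_def)
qed

text \<open>Two paths with the same ends coincide: after a common first vertex, the paths either
  continue alike or split and rejoin at a first common vertex, closing a cycle.\<close>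
lemma tpath_unique:
  "tpath xs \<Longrightarrow> tpath ys \<Longrightarrow> hd xs = hd ys \<Longrightarrow> last xs = last ys \<Longrightarrow> xs = ys"
proof (induction xs arbitrary: ys)
  case Nil then show ?case by (simp add: tpath_def)
next
  case (Cons x xs')
  obtain ys' where ys: "ys = x # ys'" using Cons.prems
    by (cases ys) (auto simp: tpath_def)
  consider "xs' = []" | "ys' = []" | "xs' \<noteq> []" "ys' \<noteq> []" by blast
  then show ?case
  proof cases
    case 1
    then show ?thesis using Cons.prems(2,4) ys by (cases "ys' = []") (auto simp: tpath_def)
  next
    case 2
    then show ?thesis using Cons.prems ys by (cases "xs' = []") (auto simp: tpath_def)
  next
    case 3
    have sx: "tpath xs'" and sy: "tpath ys'"
      using Cons.prems(1,2) 3 ys by (auto simp: tpath_def successively_Cons)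
    have lst: "last xs' = last ys'" using Cons.prems(4) 3 ys by simp
    show ?thesis
    proof (cases "hd xs' = hd ys'")
      case True
      then show ?thesis using Cons.IH[OF sx sy True lst] ys by simp
    next
      case hd_ne: False
      have "\<exists>w\<in>set xs'. w \<in> set ys'" using lst 3 by (metis last_in_set)
      then obtain us w rs where xs': "xs' = us @ w # rs" and wy: "w \<in> set ys'"
        and us: "\<forall>u\<in>set us. u \<notin> set ys'"
        using split_list_first_prop[of xs' "\<lambda>w. w \<in> set ys'"] by blast
      obtain vs rs' where ys': "ys' = vs @ w # rs'" using wy split_list by metis
      have "tpath (x # us @ [w])"
        using tpath_prefix[of "x # us @ [w]" rs] Cons.prems(1) xs' by simp
      moreover have "tpath (x # vs @ [w])"
        using tpath_prefix[of "x # vs @ [w]" rs'] Cons.prems(2) ys ys' by simp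
      moreover have "set us \<inter> set vs = {}" using us ys' by auto
      moreover have "us \<noteq> [] \<or> vs \<noteq> []" using hd_ne xs' ys' by auto
      ultimately have "has_cycle V E" by (rule two_routes_cycle)
      then show ?thesis using tree_acyclic by blast
    qed
  qed
qed

lemma tpath_exists:
  assumes "a \<in> V" "b \<in> V" shows "\<exists>xs. tpath xs \<and> hd xs = a \<and> last xs = b"
proof -
  have "(\<lambda>x y. E x y \<and> x \<in> V \<and> y \<in> V)\<^sup>*\<^sup>* a b"
    using tree_connected assms unfolding connected_graph_def by blast
  then show ?thesis
  proof (induction rule: rtranclp_induct)
    case base then show ?case using assms by (intro exI[of _ "[a]"]) (simp add: tpath_def)
  next
    case (step b c)
    then obtain xs where xs: "tpath xs" "hd xs = a" "last xs = b" by blast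
    show ?case
    proof (cases "c \<in> set xs")
      case True
      then obtain us vs where u: "xs = us @ c # vs" using split_list by metis
      then have "tpath (us @ [c]) \<and> hd (us @ [c]) = a"
        using xs tpath_prefix[of "us @ [c]" vs] by (cases us) auto
      then show ?thesis by (intro exI[of _ "us @ [c]"]) simp
    next
      case False
      then have "tpath (xs @ [c]) \<and> hd (xs @ [c]) = a" using xs step
        by (auto simp: tpath_def successively_append_iff)
      then show ?thesis by (intro exI[of _ "xs @ [c]"]) simp
    qed
  qed
qed

definition tree_path :: "'a \<Rightarrow> 'a \<Rightarrow> 'a list" where
  "tree_path a b = (THE xs. tpath xs \<and> hd xs = a \<and> last xs = b)"

lemma tree_path:
  assumes "a \<in> V" "b \<in> V"
  shows "tpath (tree_path a b)" "hd (tree_path a b) = a" "last (tree_path a b) = b"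
proof -
  obtain xs where xs: "tpath xs" "hd xs = a" "last xs = b" using tpath_exists[OF assms] by blast
  have "\<exists>!xs. tpath xs \<and> hd xs = a \<and> last xs = b"
    using xs tpath_unique by (intro ex1I[of _ xs]) auto
  then have "tpath (tree_path a b) \<and> hd (tree_path a b) = a \<and> last (tree_path a b) = b"
    unfolding tree_path_def by (rule theI')
  then show "tpath (tree_path a b)" "hd (tree_path a b) = a" "last (tree_path a b) = b"
    by auto
qed

lemma tree_path_eqI:
  assumes "tpath xs" "hd xs = a" "last xs = b" shows "tree_path a b = xs"
proof -
  have ab: "a \<in> V" "b \<in> V" using assms tpath_nonempty[OF assms(1)] tpath_set[OF assms(1)] by auto
  show ?thesis using tpath_unique[OF tree_path(1)[OF ab] assms(1)] by (simp add: tree_path ab assms)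
qed

lemma tree_path_ends:
  assumes "a \<in> V" "b \<in> V" shows "a \<in> set (tree_path a b) \<and> b \<in> set (tree_path a b)"
proof -
  have "tree_path a b \<noteq> []" using tpath_nonempty tree_path(1)[OF assms] by blast
  then show ?thesis using tree_path(2,3)[OF assms] hd_in_set last_in_set by metis
qed

lemma tree_path_rev:
  assumes "a \<in> V" "b \<in> V" shows "tree_path b a = rev (tree_path a b)"
proof -
  note p = tree_path[OF assms]
  have "tpath (rev (tree_path a b))" using p(1) tpath_rev by simp
  moreover have "tree_path a b \<noteq> []" using p(1) tpath_nonempty by blast
  ultimately show ?thesis using p(2,3) by (intro tree_path_eqI) (simp_all add: hd_rev last_rev)
qed

lemma set_tree_path_sym: "a \<in> V \<Longrightarrow> b \<in> V \<Longrightarrow> set (tree_path b a) = set (tree_path a b)"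
  using tree_path_rev[of a b] by simp

lemma tree_path_segment:
  assumes "tpath xs" "i \<le> j" "j < length xs"
  shows "tree_path (xs ! i) (xs ! j) = drop i (take (Suc j) xs)"
proof (rule tree_path_eqI)
  let ?ys = "drop i (take (Suc j) xs)"
  have len: "length ?ys = Suc j - i" using assms by simp
  have nth: "\<And>t. t < length ?ys \<Longrightarrow> ?ys ! t = xs ! (i + t)" using assms by simp
  have "distinct ?ys" using assms(1) by (simp add: tpath_def distinct_take distinct_drop)
  moreover have "?ys \<noteq> []" using len assms by auto
  moreover have "set ?ys \<subseteq> V" using tpath_set[OF assms(1)]
    by (meson order_trans set_drop_subset set_take_subset)
  moreover have "successively E ?ys"
    unfolding successively_conv_nth
  proof (intro allI impI)
    fix t assume "Suc t < length ?ys"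
    then show "E (?ys ! t) (?ys ! Suc t)" using nth assms(1) len
      by (simp add: tpath_def successively_conv_nth)
  qed
  ultimately show "tpath ?ys" by (simp add: tpath_def)
  show "hd ?ys = xs ! i" using assms by (simp add: hd_drop_conv_nth)
  show "last ?ys = xs ! j" using assms \<open>?ys \<noteq> []\<close> len nth[of "j - i"]
    by (simp add: last_conv_nth)
qed

lemma tree_path_between:
  assumes "tpath xs" "i < length xs" "j < length xs" "k < length xs"
    and "i \<le> j \<and> j \<le> k \<or> k \<le> j \<and> j \<le> i"
  shows "xs ! j \<in> set (tree_path (xs ! i) (xs ! k))"
proof -
  have in_segment: "xs ! j \<in> set (tree_path (xs ! p) (xs ! q))"
    if "p \<le> j" "j \<le> q" "q < length xs" for p q
  proof -
    have "xs ! j = drop p (take (Suc q) xs) ! (j - p)" using that by simp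
    moreover have "j - p < length (drop p (take (Suc q) xs))" using that by simp
    ultimately show ?thesis using tree_path_segment[OF assms(1) _ that(3), of p] that
      by (metis nth_mem le_trans)
  qed
  have V: "xs ! i \<in> V" "xs ! k \<in> V" using assms tpath_set by (meson nth_mem subsetD)+
  show ?thesis using assms(5)
  proof
    assume "i \<le> j \<and> j \<le> k" then show ?thesis using in_segment assms(4) by blast
  next
    assume "k \<le> j \<and> j \<le> i"
    then show ?thesis using in_segment[of k i] assms(2) set_tree_path_sym[OF V] by blast
  qed
qed

lemma tpath_join:
  assumes "tpath xs" "tpath ys" "last xs = hd ys" "set xs \<inter> set ys \<subseteq> {hd ys}"
  shows "tpath (xs @ tl ys)" "hd (xs @ tl ys) = hd xs" "last (xs @ tl ys) = last ys"
proof -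
  have ne: "xs \<noteq> []" "ys \<noteq> []" using assms tpath_nonempty by auto
  then have ys: "ys = hd ys # tl ys" by simp
  have xs: "xs = butlast xs @ [hd ys]" using ne assms(3) by (metis append_butlast_last_id)
  have sy: "set ys = insert (hd ys) (set (tl ys))" using ys by (metis list.simps(15))
  have d2: "distinct (hd ys # tl ys)" using assms(2) ys by (metis tpath_def)
  have "set xs \<inter> set (tl ys) = {}" using assms(4) sy d2 by auto
  then have "distinct (xs @ tl ys)" using assms(1) d2 by (simp add: tpath_def)
  moreover have "set (xs @ tl ys) \<subseteq> V" using tpath_set[OF assms(1)] tpath_set[OF assms(2)] sy
    by auto
  moreover have "successively E (xs @ tl ys)"
  proof -
    have "successively E (butlast xs @ [hd ys])" using assms(1) xs by (metis tpath_def)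
    moreover have "successively E (hd ys # tl ys)" using assms(2) ys by (metis tpath_def)
    ultimately have "successively E (butlast xs @ hd ys # tl ys)" by (rule successively_glue)
    then show ?thesis using xs by (metis append.assoc append_Cons append_Nil)
  qed
  ultimately show "tpath (xs @ tl ys)" using ne by (simp add: tpath_def)
  show "hd (xs @ tl ys) = hd xs" using ne by simp
  show "last (xs @ tl ys) = last ys" using ne assms(3)
    by (metis append.right_neutral last_ConsL last_appendR last_tl list.collapse)
qed

definition convex :: "'a set \<Rightarrow> bool" where
  "convex S \<longleftrightarrow> S \<subseteq> V \<and> (\<forall>a\<in>S. \<forall>b\<in>S. set (tree_path a b) \<subseteq> S)"

lemma convex_Int: "convex A \<Longrightarrow> convex B \<Longrightarrow> convex (A \<inter> B)"
  unfolding convex_def by blast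

lemma convex_V: "convex V"
  using tree_path tpath_set unfolding convex_def by blast

lemma convex_tpath: assumes "tpath xs" shows "convex (set xs)"
  unfolding convex_def
proof (intro conjI ballI)
  show "set xs \<subseteq> V" using assms tpath_set by blast
  fix a b assume "a \<in> set xs" "b \<in> set xs"
  then obtain i j where ij: "i < length xs" "j < length xs" "a = xs ! i" "b = xs ! j"
    by (metis in_set_conv_nth)
  have V: "a \<in> V" "b \<in> V" using \<open>set xs \<subseteq> V\<close> \<open>a \<in> set xs\<close> \<open>b \<in> set xs\<close> by auto
  have segment: "set (drop i (take (Suc j) xs)) \<subseteq> set xs" for i j
    by (meson order_trans set_drop_subset set_take_subset)
  show "set (tree_path a b) \<subseteq> set xs"
  proof (cases "i \<le> j")
    case True then show ?thesis using tree_path_segment[OF assms True ij(2)] ij segment by simp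
  next
    case False
    then have "tree_path b a = drop j (take (Suc i) xs)" using tree_path_segment[OF assms _ ij(1)] ij
      by simp
    then show ?thesis using set_tree_path_sym[OF V] segment by metis
  qed
qed

text \<open>The gate of a convex set \<open>S\<close> seen from \<open>z\<close>: a point of \<open>S\<close> lying on the path from \<open>z\<close>
  to every point of \<open>S\<close> (the first point of \<open>S\<close> met when walking from \<open>z\<close> into \<open>S\<close>).\<close>
lemma gate:
  assumes "convex S" "s0 \<in> S" "z \<in> V"
  shows "\<exists>g\<in>S. \<forall>s\<in>S. g \<in> set (tree_path z s)"
proof -
  have s0V: "s0 \<in> V" using assms unfolding convex_def by blast
  define xs where "xs = tree_path z s0"
  note px = tree_path[OF assms(3) s0V, folded xs_def]
  define K where "K = {i. i < length xs \<and> xs ! i \<in> S}"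
  have "length xs - 1 \<in> K"
    unfolding K_def using tpath_nonempty[OF px(1)] px assms(2) by (simp add: last_conv_nth)
  then have kK: "Least (\<lambda>i. i \<in> K) \<in> K" by (metis LeastI)
  define k where "k = Least (\<lambda>i. i \<in> K)"
  have kmin: "\<And>i. i \<in> K \<Longrightarrow> k \<le> i" unfolding k_def by (simp add: Least_le)
  define g where "g = xs ! k"
  have kl: "k < length xs" "g \<in> S" using kK unfolding K_def g_def k_def by auto
  have gV: "g \<in> V" using kl assms(1) unfolding convex_def by blast
  have to_gate: "tree_path z g = take (Suc k) xs"
    using tree_path_segment[OF px(1) _ kl(1), of 0] px tpath_nonempty[OF px(1)] g_def
    by (simp add: hd_conv_nth)
  show ?thesis
  proof (intro bexI[OF _ kl(2)] ballI)
    fix s assume s: "s \<in> S"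
    have sV: "s \<in> V" using s assms unfolding convex_def by blast
    note pzg = tree_path[OF assms(3) gV] and pgs = tree_path[OF gV sV]
    have inS: "set (tree_path g s) \<subseteq> S" using assms(1) kl s unfolding convex_def by blast
    have "set (tree_path z g) \<inter> set (tree_path g s) \<subseteq> {hd (tree_path g s)}"
    proof
      fix x assume x: "x \<in> set (tree_path z g) \<inter> set (tree_path g s)"
      then obtain t where t: "t < length (take (Suc k) xs)" "x = take (Suc k) xs ! t"
        using to_gate by (metis IntD1 in_set_conv_nth)
      have "t \<in> K" using t x inS unfolding K_def by auto
      then have "t = k" using kmin t by fastforce
      then show "x \<in> {hd (tree_path g s)}" using t pgs g_def by simp
    qed
    then have "tree_path z s = tree_path z g @ tl (tree_path g s)"
      using tpath_join[OF pzg(1) pgs(1)] pzg pgs by (intro tree_path_eqI) auto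
    then show "g \<in> set (tree_path z s)" using tree_path_ends[OF assms(3) gV] by simp
  qed
qed

lemma median:
  assumes "a \<in> V" "b \<in> V" "c \<in> V"
  shows "\<exists>m \<in> set (tree_path a b). m \<in> set (tree_path c a) \<and> m \<in> set (tree_path c b)"
proof -
  have ends: "a \<in> set (tree_path a b)" "b \<in> set (tree_path a b)"
    using tree_path_ends[OF assms(1,2)] by auto
  obtain m where "m \<in> set (tree_path a b)" "\<forall>s \<in> set (tree_path a b). m \<in> set (tree_path c s)"
    using gate[OF convex_tpath[OF tree_path(1)[OF assms(1,2)]] ends(1) assms(3)] by blast
  then show ?thesis using ends by blast
qed

lemma helly3:
  assumes "convex A" "convex B" "convex C" "A \<inter> B \<noteq> {}" "B \<inter> C \<noteq> {}" "A \<inter> C \<noteq> {}"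
  shows "A \<inter> B \<inter> C \<noteq> {}"
proof -
  obtain a b c where abc: "a \<in> B \<inter> C" "b \<in> A \<inter> C" "c \<in> A \<inter> B" using assms by blast
  then have "a \<in> V" "b \<in> V" "c \<in> V" using assms unfolding convex_def by auto
  then obtain m where "m \<in> set (tree_path a b)" "m \<in> set (tree_path c a)" "m \<in> set (tree_path c b)"
    using median by blast
  moreover have "set (tree_path a b) \<subseteq> C" "set (tree_path c a) \<subseteq> B" "set (tree_path c b) \<subseteq> A"
    using abc assms(1-3) unfolding convex_def by (meson IntD1 IntD2)+
  ultimately show ?thesis by blast
qed

text \<open>Helly property, in the strengthened form needed for induction: a convex set \<open>C\<close>
  meeting every member of a pairwise intersecting finite convex family meets their
  intersection.\<close>
lemma helly_relative:
  assumes "finite F" "F \<noteq> {}" "\<forall>A\<in>F. convex A" "\<forall>A\<in>F. \<forall>B\<in>F. A \<inter> B \<noteq> {}"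
    and "convex C" "\<forall>A\<in>F. C \<inter> A \<noteq> {}"
  shows "C \<inter> \<Inter>F \<noteq> {}"
  using assms
proof (induction F arbitrary: C rule: finite_ne_induct)
  case (singleton A) then show ?case by simp
next
  case (insert A F)
  have conv: "convex A" "\<forall>B\<in>F. convex B" using insert.prems(1) by auto
  have meet: "\<forall>B\<in>F. A \<inter> B \<noteq> {}" "\<forall>B\<in>F. \<forall>B'\<in>F. B \<inter> B' \<noteq> {}"
    using insert.prems(2) by auto
  have "\<forall>B\<in>F. (C \<inter> A) \<inter> B \<noteq> {}"
    using helly3[OF insert.prems(3) conv(1)] conv(2) meet(1) insert.prems(4) by simp
  then have "(C \<inter> A) \<inter> \<Inter>F \<noteq> {}"
    using insert.IH conv(2) meet(2) convex_Int[OF insert.prems(3) conv(1)] by blast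
  then show ?case by (metis Inter_insert inf.assoc)
qed

corollary helly:
  assumes "finite F" "F \<noteq> {}" "\<forall>A\<in>F. convex A" "\<forall>A\<in>F. \<forall>B\<in>F. A \<inter> B \<noteq> {}"
  shows "\<exists>z\<in>V. \<forall>A\<in>F. z \<in> A"
proof -
  have "V \<inter> A \<noteq> {}" if "A \<in> F" for A
  proof -
    have "A \<subseteq> V" "A \<inter> A \<noteq> {}" using assms(3,4) that unfolding convex_def by blast+
    then show ?thesis by blast
  qed
  then have "V \<inter> \<Inter>F \<noteq> {}" using helly_relative[OF assms convex_V] by blast
  then show ?thesis by blast
qed

lemma tree_path_second:
  assumes "z \<in> V" "a \<in> V" "a \<noteq> z" shows "E z (tree_path z a ! 1)"
proof -
  note p = tree_path[OF assms(1,2)]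
  have "length (tree_path z a) \<noteq> 1" using p assms(3)
    by (metis One_nat_def hd_conv_nth last_conv_nth length_0_conv zero_neq_one diff_Suc_1)
  then have "Suc 0 < length (tree_path z a)" using tpath_nonempty[OF p(1)]
    by (cases "tree_path z a") auto
  then show ?thesis using p(1,2) unfolding tpath_def successively_conv_nth
    by (metis One_nat_def hd_conv_nth list.size(3) not_less0)
qed

lemma tree_path_second_distinct:
  assumes "z \<in> set (tree_path a b)" "a \<in> V" "b \<in> V" "a \<noteq> z" "b \<noteq> z"
  shows "tree_path z a ! 1 \<noteq> tree_path z b ! 1"
proof -
  define xs where "xs = tree_path a b"
  note p = tree_path[OF assms(2,3), folded xs_def]
  obtain k where k: "k < length xs" "xs ! k = z" using assms(1) xs_def by (metis in_set_conv_nth)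
  have ne: "xs \<noteq> []" using p tpath_nonempty by blast
  have k0: "k \<noteq> 0" using k assms(4) p ne by (metis hd_conv_nth)
  have k1: "k \<noteq> length xs - 1" using k assms(5) p ne by (metis last_conv_nth)
  have zV: "z \<in> V" using k p tpath_set by (metis nth_mem subsetD)
  have "tree_path a z = take (Suc k) xs"
    using tree_path_segment[OF p(1) _ k(1), of 0] k p ne by (simp add: hd_conv_nth)
  then have "tree_path z a ! 1 = xs ! (k - 1)"
    using tree_path_rev[OF assms(2) zV] k k0 by (simp add: rev_nth)
  moreover have "tree_path z b = drop k xs"
    using tree_path_segment[OF p(1), of k "length xs - 1"] k p ne by (simp add: last_conv_nth)
  then have "tree_path z b ! 1 = xs ! Suc k" using k k1 by simp
  moreover have "distinct xs" using p tpath_def by blast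
  ultimately show ?thesis using k k0 k1 by (simp add: nth_eq_iff_index_eq)
qed

end

lemma chromatic_number_le:
  assumes "finite N" "card N \<le> k" "\<forall>v\<in>V. f v \<in> N"
    and "\<forall>u\<in>V. \<forall>v\<in>V. E u v \<longrightarrow> f u \<noteq> f v"
  shows "chromatic_number V E \<le> k"
proof -
  obtain r where r: "bij_betw r N {0..<card N}" using ex_bij_betw_finite_nat[OF assms(1)] by blast
  have "\<forall>v\<in>V. r (f v) < k" using bij_betw_apply[OF r] assms(2,3) by fastforce
  moreover have "\<forall>u\<in>V. \<forall>v\<in>V. E u v \<longrightarrow> r (f u) \<noteq> r (f v)"
    using bij_betw_imp_inj_on[OF r] assms(3,4) by (metis inj_on_eq_iff)
  ultimately have "\<exists>c. (\<forall>v\<in>V. c v < k) \<and> (\<forall>u\<in>V. \<forall>v\<in>V. E u v \<longrightarrow> c u \<noteq> c v)"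
    by (intro exI[of _ "\<lambda>v. r (f v)"]) blast
  then show ?thesis unfolding chromatic_number_def by (rule Least_le)
qed

lemma chromatic_colouring_exists:
  fixes n :: nat and E :: "nat \<Rightarrow> nat \<Rightarrow> bool"
  assumes "\<forall>v. \<not> E v v"
  shows "\<exists>c. (\<forall>v\<in>{..<n}. c v < chromatic_number {..<n} E)
            \<and> (\<forall>u\<in>{..<n}. \<forall>v\<in>{..<n}. E u v \<longrightarrow> c u \<noteq> c v)"
proof -
  have "\<exists>(k :: nat) (c :: nat \<Rightarrow> nat). (\<forall>v\<in>{..<n}. c v < k) \<and> (\<forall>u\<in>{..<n}. \<forall>v\<in>{..<n}. E u v \<longrightarrow> c u \<noteq> c v)"
    using assms by (intro exI[of _ n] exI[of _ id]) auto
  then show ?thesis unfolding chromatic_number_def by (rule LeastI_ex)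
qed

text \<open>The vertices of G-hat whose path is a single leaf \<open>y_i\<close>; all other paths contain the
  centre \<open>q\<close> of the star and therefore form a clique.\<close>
definition is_leaf_path :: "hat_vertex \<Rightarrow> bool" where
  "is_leaf_path x \<longleftrightarrow> (\<exists>i. x = HP i)"

lemma centre_in_hat_path: "\<not> is_leaf_path x \<Longrightarrow> None \<in> hat_path x"
  by (cases x) (auto simp: is_leaf_path_def)

lemma hat_adj_centre: "\<not> is_leaf_path x \<Longrightarrow> \<not> is_leaf_path y \<Longrightarrow> x \<noteq> y \<Longrightarrow> hat_adj x y"
  unfolding hat_adj_def using centre_in_hat_path by blast

lemma hat_adj_sym: "hat_adj x y = hat_adj y x"
  unfolding hat_adj_def by blast

lemma hat_adj_HP [simp]:
  "hat_adj (HP i) (HPE a b) \<longleftrightarrow> i = a \<or> i = b"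
  "hat_adj (HP i) (HPQ a) \<longleftrightarrow> i = a"
  "hat_adj (HP i) (HP j) \<longleftrightarrow> False"
  by (auto simp: hat_adj_def)

lemma hat_V_cases:
  assumes "x \<in> hat_V n E"
  obtains (leaf) i where "i < n" "x = HP i"
    | (edge) i j where "x = HPE i j" "i < j" "j < n" "E i j"
    | (pendant) i where "i < n" "x = HPQ i"
  using assms unfolding hat_V_def by auto

lemma finite_hat_V: "finite (hat_V n E)"
proof -
  have "{HPE i j | i j. i < j \<and> j < n \<and> E i j} \<subseteq> (\<lambda>(i, j). HPE i j) ` ({..<n} \<times> {..<n})"
    by auto
  moreover have "{HPQ i | i. i < n \<and> degree {..<n} E i = 1} \<subseteq> HPQ ` {..<n}" by auto
  ultimately show ?thesis unfolding hat_V_def by (meson finite_Un finite_SigmaI finite_imageI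
      finite_lessThan finite_subset)
qed

locale base_graph =
  fixes n :: nat and E :: "nat \<Rightarrow> nat \<Rightarrow> bool"
  assumes two_vertices: "n \<ge> 2" and simple: "simple_graph {..<n} E"
    and connected: "connected_graph {..<n} E"
begin

lemma adj_sym: "E u v \<Longrightarrow> E v u"
  and adj_irrefl: "\<not> E v v"
  and adj_range: "E u v \<Longrightarrow> u < n \<and> v < n"
  using simple unfolding simple_graph_def by blast+

lemma has_neighbour: assumes "i < n" shows "\<exists>j. E i j"
proof -
  obtain j where j: "j < n" "j \<noteq> i" using two_vertices assms
    by (metis One_nat_def Suc_1 Suc_le_lessD less_Suc_eq_0_disj zero_less_Suc neq0_conv
        less_trans_Suc)
  have "(\<lambda>x y. E x y \<and> x \<in> {..<n} \<and> y \<in> {..<n})\<^sup>*\<^sup>* i j"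
    using connected assms j unfolding connected_graph_def by blast
  then show ?thesis using j(2) by (cases rule: converse_rtranclpE) auto
qed

lemma HP_in_hat_V: "i < n \<Longrightarrow> HP i \<in> hat_V n E"
  unfolding hat_V_def by blast

lemma edge_in_hat_V: "E i j \<Longrightarrow> HPE (min i j) (max i j) \<in> hat_V n E"
  unfolding hat_V_def using adj_range adj_irrefl adj_sym
  by (cases "i < j") (auto simp: min_def max_def intro!: exI[of _ "min i j"])

text \<open>For an edge \<open>ij\<close> of G some non-leaf path meets the leaf of \<open>j\<close> but not that of \<open>i\<close>:
  another edge at \<open>j\<close>, or the pendant path of \<open>j\<close> if \<open>j\<close> has degree one.\<close>
lemma separating_path:
  assumes "E i j"
  shows "\<exists>y\<in>hat_V n E. \<not> is_leaf_path y \<and> hat_adj (HP j) y \<and> \<not> hat_adj (HP i) y"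
proof (cases "\<exists>l. l \<noteq> i \<and> E j l")
  case True
  then obtain l where l: "l \<noteq> i" "E j l" by blast
  have "i \<noteq> j" using assms adj_irrefl by blast
  then show ?thesis using edge_in_hat_V[OF l(2)] l
    by (intro bexI[of _ "HPE (min j l) (max j l)"]) (auto simp: is_leaf_path_def min_def max_def)
next
  case False
  have "{u \<in> {..<n}. E j u} = {i}" using False assms adj_sym adj_range by auto
  then have "degree {..<n} E j = 1" unfolding degree_def by simp
  then have "HPQ j \<in> hat_V n E" unfolding hat_V_def using assms adj_range by blast
  moreover have "i \<noteq> j" using assms adj_irrefl by blast
  ultimately show ?thesis by (intro bexI[of _ "HPQ j"]) (auto simp: is_leaf_path_def)
qed

lemma some_edge_vertex: "\<exists>x\<in>hat_V n E. \<not> is_leaf_path x"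
proof -
  obtain j where "E 0 j" using has_neighbour two_vertices by fastforce
  then show ?thesis using edge_in_hat_V by (auto simp: is_leaf_path_def)
qed

end

section \<open>Upper bound: a representation in a tree of degree \<open>k\<close> gives a \<open>k\<close>-colouring\<close>

locale representation = base_graph n E + tree TV TE
  for n E and TV :: "nat set" and TE +
  fixes k :: nat and p :: "hat_vertex \<Rightarrow> nat set"
  assumes max_degree: "\<forall>v\<in>TV. degree TV TE v \<le> k"
    and path_sets: "\<forall>x\<in>hat_V n E. is_path_set TV TE (p x)"
    and intersection: "\<forall>x\<in>hat_V n E. \<forall>y\<in>hat_V n E. x \<noteq> y \<longrightarrow> (hat_adj x y \<longleftrightarrow> p x \<inter> p y \<noteq> {})"
begin

lemma rep_tpath: "x \<in> hat_V n E \<Longrightarrow> \<exists>xs. tpath xs \<and> p x = set xs"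
  using path_sets unfolding is_path_set_def tpath_iff_walk by simp

lemma rep_convex:
  assumes "x \<in> hat_V n E" shows "convex (p x)" "p x \<noteq> {}"
proof -
  obtain xs where "tpath xs" "p x = set xs" using rep_tpath[OF assms] by blast
  then show "convex (p x)" "p x \<noteq> {}" using convex_tpath tpath_nonempty by auto
qed

text \<open>By Helly, all paths of non-leaf vertices share a host vertex, the hub.\<close>
lemma hub_exists: "\<exists>z\<in>TV. \<forall>x\<in>hat_V n E. \<not> is_leaf_path x \<longrightarrow> z \<in> p x"
proof -
  let ?C = "{x\<in>hat_V n E. \<not> is_leaf_path x}"
  have "\<forall>A\<in>p ` ?C. \<forall>B\<in>p ` ?C. A \<inter> B \<noteq> {}"
  proof (intro ballI)
    fix A B assume "A \<in> p ` ?C" "B \<in> p ` ?C"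
    then obtain x y where xy: "x \<in> ?C" "y \<in> ?C" "A = p x" "B = p y" by blast
    show "A \<inter> B \<noteq> {}"
    proof (cases "x = y")
      case True then show ?thesis using rep_convex(2) xy by auto
    next
      case False
      then have "hat_adj x y" using hat_adj_centre xy by blast
      then show ?thesis using intersection False xy by blast
    qed
  qed
  moreover have "finite (p ` ?C)" using finite_hat_V by simp
  moreover have "p ` ?C \<noteq> {}" using some_edge_vertex by blast
  moreover have "\<forall>A\<in>p ` ?C. convex A" using rep_convex(1) by blast
  ultimately have "\<exists>z\<in>TV. \<forall>A\<in>p ` ?C. z \<in> A" by (intro helly)
  then show ?thesis by auto
qed

context
  fixes z :: nat
  assumes hub: "z \<in> TV" "\<And>x. x \<in> hat_V n E \<Longrightarrow> \<not> is_leaf_path x \<Longrightarrow> z \<in> p x"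
begin

text \<open>The hub avoids every leaf path, since some non-leaf path misses that leaf path.\<close>
lemma hub_not_in_leaf: assumes "i < n" shows "z \<notin> p (HP i)"
proof
  assume zi: "z \<in> p (HP i)"
  obtain j where "E i j" using has_neighbour assms by blast
  then obtain y where y: "y \<in> hat_V n E" "\<not> is_leaf_path y" "\<not> hat_adj (HP i) y"
    using separating_path adj_sym by blast
  have "HP i \<noteq> y" using y(2) by (auto simp: is_leaf_path_def)
  then show False using intersection hub(2)[OF y(1,2)] y zi HP_in_hat_V[OF assms] by blast
qed

definition leaf_gate :: "nat \<Rightarrow> nat" where
  "leaf_gate i = (SOME g. g \<in> p (HP i) \<and> (\<forall>s\<in>p (HP i). g \<in> set (tree_path z s)))"

lemma leaf_gate:
  assumes "i < n"
  shows "leaf_gate i \<in> p (HP i)" "\<And>s. s \<in> p (HP i) \<Longrightarrow> leaf_gate i \<in> set (tree_path z s)"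
    and "leaf_gate i \<in> TV" "leaf_gate i \<noteq> z"
proof -
  have "\<exists>g. g \<in> p (HP i) \<and> (\<forall>s\<in>p (HP i). g \<in> set (tree_path z s))"
    using gate rep_convex(1)[OF HP_in_hat_V[OF assms]] rep_convex(2)[OF HP_in_hat_V[OF assms]] hub(1) by blast
  then have g: "leaf_gate i \<in> p (HP i) \<and> (\<forall>s\<in>p (HP i). leaf_gate i \<in> set (tree_path z s))"
    unfolding leaf_gate_def by (rule someI_ex)
  then show "leaf_gate i \<in> p (HP i)" "\<And>s. s \<in> p (HP i) \<Longrightarrow> leaf_gate i \<in> set (tree_path z s)"
    by auto
  show "leaf_gate i \<in> TV" "leaf_gate i \<noteq> z"
    using g rep_convex(1)[OF HP_in_hat_V[OF assms]] hub_not_in_leaf[OF assms]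
    unfolding convex_def by auto
qed

text \<open>Every non-leaf path meeting the leaf path of \<open>v_i\<close> contains its gate, since it
  contains the hub and is convex.\<close>
lemma leaf_gate_in_adjacent:
  assumes "i < n" "x \<in> hat_V n E" "\<not> is_leaf_path x" "hat_adj (HP i) x"
  shows "leaf_gate i \<in> p x"
proof -
  have "HP i \<noteq> x" using assms(3) by (auto simp: is_leaf_path_def)
  then obtain s where s: "s \<in> p (HP i)" "s \<in> p x"
    using intersection assms HP_in_hat_V[OF assms(1)] by blast
  have "set (tree_path z s) \<subseteq> p x"
    using rep_convex(1)[OF assms(2)] hub(2)[OF assms(2,3)] s(2) unfolding convex_def by blast
  then show ?thesis using leaf_gate(2)[OF assms(1) s(1)] by blast
qed

text \<open>For an edge \<open>ij\<close>, the gate of \<open>i\<close> is not on the way from the hub to the gate of \<open>j\<close>: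
  otherwise the separating path of the edge would meet the leaf path of \<open>i\<close>.\<close>
lemma leaf_gate_not_before:
  assumes "E i j" shows "leaf_gate i \<notin> set (tree_path z (leaf_gate j))"
proof
  assume before: "leaf_gate i \<in> set (tree_path z (leaf_gate j))"
  have ij: "i < n" "j < n" using adj_range assms by auto
  obtain y where y: "y \<in> hat_V n E" "\<not> is_leaf_path y" "hat_adj (HP j) y" "\<not> hat_adj (HP i) y"
    using separating_path[OF assms] by blast
  have "set (tree_path z (leaf_gate j)) \<subseteq> p y"
    using leaf_gate_in_adjacent[OF ij(2) y(1-3)] rep_convex(1)[OF y(1)] hub(2)[OF y(1,2)]
    unfolding convex_def by blast
  then have "leaf_gate i \<in> p y" using before by blast
  moreover have "HP i \<noteq> y" using y(2) by (auto simp: is_leaf_path_def)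
  ultimately show False
    using intersection y leaf_gate(1)[OF ij(1)] HP_in_hat_V[OF ij(1)] by blast
qed

text \<open>Hence for an edge \<open>ij\<close> the hub lies between the two gates: all three lie on the path
  of the edge vertex, and neither gate lies between the hub and the other gate.\<close>
lemma hub_between_gates:
  assumes "E i j" shows "z \<in> set (tree_path (leaf_gate i) (leaf_gate j))"
proof -
  have ij: "i < n" "j < n" using adj_range assms by auto
  define x where "x = HPE (min i j) (max i j)"
  have x: "x \<in> hat_V n E" "\<not> is_leaf_path x" "hat_adj (HP i) x" "hat_adj (HP j) x"
    unfolding x_def using edge_in_hat_V[OF assms] by (auto simp: is_leaf_path_def min_def max_def)
  obtain xs where xs: "tpath xs" "p x = set xs" using rep_tpath[OF x(1)] by blast
  obtain a b c where abc: "a < length xs" "b < length xs" "c < length xs"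
    "xs ! a = z" "xs ! b = leaf_gate i" "xs ! c = leaf_gate j"
    using xs(2) hub(2)[OF x(1,2)] leaf_gate_in_adjacent[OF ij(1) x(1,2,3)]
      leaf_gate_in_adjacent[OF ij(2) x(1,2,4)] by (metis in_set_conv_nth)
  have "\<not> (a \<le> b \<and> b \<le> c \<or> c \<le> b \<and> b \<le> a)"
    using tree_path_between[OF xs(1) abc(1,2,3)] abc leaf_gate_not_before[OF assms] by auto
  moreover have "\<not> (a \<le> c \<and> c \<le> b \<or> b \<le> c \<and> c \<le> a)"
    using tree_path_between[OF xs(1) abc(1,3,2)] abc leaf_gate_not_before[OF adj_sym[OF assms]]
    by auto
  ultimately have "b \<le> a \<and> a \<le> c \<or> c \<le> a \<and> a \<le> b" by linarith
  then show ?thesis using tree_path_between[OF xs(1) abc(2,1,3)] abc by auto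
qed

text \<open>Colour \<open>v_i\<close> by the neighbour of the hub through which its gate is reached.\<close>
definition hub_colour :: "nat \<Rightarrow> nat" where
  "hub_colour i = tree_path z (leaf_gate i) ! 1"

lemma hub_colour_neighbour: "i < n \<Longrightarrow> hub_colour i \<in> {u\<in>TV. TE z u}"
  unfolding hub_colour_def using tree_path_second[OF hub(1)] leaf_gate(3,4) edge_in_V by blast

lemma hub_colour_proper: assumes "E i j" shows "hub_colour i \<noteq> hub_colour j"
  unfolding hub_colour_def
  using tree_path_second_distinct[OF hub_between_gates[OF assms]] leaf_gate(3,4) adj_range assms
  by blast

end

theorem chromatic_number_le_degree: "chromatic_number {..<n} E \<le> k"
proof -
  obtain z where z: "z \<in> TV" "\<forall>x\<in>hat_V n E. \<not> is_leaf_path x \<longrightarrow> z \<in> p x"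
    using hub_exists by blast
  show ?thesis
  proof (rule chromatic_number_le[where f = "hub_colour z"])
    show "finite {u\<in>TV. TE z u}" using finite_V by simp
    show "card {u\<in>TV. TE z u} \<le> k" using max_degree z(1) unfolding degree_def by blast
    show "\<forall>v\<in>{..<n}. hub_colour z v \<in> {u\<in>TV. TE z u}" using hub_colour_neighbour z by blast
    show "\<forall>u\<in>{..<n}. \<forall>v\<in>{..<n}. E u v \<longrightarrow> hub_colour z u \<noteq> hub_colour z v"
      using hub_colour_proper z by blast
  qed
qed

end

corollary chromatic_number_upper_bound:
  assumes "base_graph n E" "in_VPT_class k (hat_V n E) hat_adj"
  shows "chromatic_number {..<n} E \<le> k"
proof -
  obtain TV :: "nat set" and TE p where "is_tree TV TE" "\<forall>v\<in>TV. degree TV TE v \<le> k"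
    "\<forall>x\<in>hat_V n E. is_path_set TV TE (p x)"
    "\<forall>x\<in>hat_V n E. \<forall>y\<in>hat_V n E. x \<noteq> y \<longrightarrow> (hat_adj x y \<longleftrightarrow> p x \<inter> p y \<noteq> {})"
    using assms(2) unfolding in_VPT_class_def by blast
  then interpret representation n E TV TE k p
    using assms(1) by (intro representation.intro representation_axioms.intro tree.intro)
  show ?thesis by (rule chromatic_number_le_degree)
qed

section \<open>Trees given by parent pointers\<close>

definition parent_graph :: "nat set \<Rightarrow> (nat \<Rightarrow> nat) \<Rightarrow> nat \<Rightarrow> nat \<Rightarrow> bool" where
  "parent_graph V par u v \<longleftrightarrow> u \<in> V \<and> v \<in> V \<and> ((v \<noteq> 0 \<and> u = par v) \<or> (u \<noteq> 0 \<and> v = par u))"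

text \<open>A graph in which every edge joins a vertex to its (smaller) parent has no cycle: the
  largest vertex of a cycle would have both cycle neighbours equal to its parent.\<close>
lemma no_cycle_parent_edges:
  fixes TE :: "nat \<Rightarrow> nat \<Rightarrow> bool"
  assumes "\<And>u v. TE u v \<Longrightarrow> (u = f v \<and> u < v) \<or> (v = f u \<and> v < u)"
  shows "\<not> has_cycle V TE"
proof
  assume "has_cycle V TE"
  then obtain xs where xs: "length xs \<ge> 3" "distinct xs" "successively TE xs" "TE (last xs) (hd xs)"
    unfolding has_cycle_def is_walk_iff_successively by blast
  define L where "L = length xs"
  have ne: "xs \<noteq> []" using xs by auto
  define m where "m = Max (set xs)"
  obtain q where q: "q < L" "xs ! q = m"
    unfolding L_def m_def using ne by (metis Max_in finite_set in_set_conv_nth set_empty)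
  have cyclic_edge: "TE (xs ! b) (xs ! a)"
    if "a < L" "b < L" "a = Suc b \<or> (b = L - 1 \<and> a = 0)" for a b
    using that(3)
  proof
    assume "a = Suc b" then show ?thesis using xs(3) that unfolding successively_conv_nth L_def by blast
  next
    assume "b = L - 1 \<and> a = 0" then show ?thesis using xs(4) ne unfolding L_def
      by (simp add: last_conv_nth hd_conv_nth)
  qed
  have to_parent: "xs ! t = f m" if "t < L" "TE (xs ! t) m \<or> TE m (xs ! t)" for t
  proof -
    have "xs ! t \<le> m" unfolding m_def L_def using that(1) L_def by simp
    then show ?thesis using that(2) assms by fastforce
  qed
  define a where "a = (if q = 0 then L - 1 else q - 1)"
  define b where "b = (if q = L - 1 then 0 else Suc q)"
  have ab: "a < L" "b < L" "a \<noteq> b" using q xs(1) unfolding a_def b_def L_def by auto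
  have "xs ! a = f m"
    using to_parent ab cyclic_edge[OF q(1) ab(1)] q unfolding a_def by (cases "q = 0") auto
  moreover have "xs ! b = f m"
    using to_parent ab cyclic_edge[OF ab(2) q(1)] q unfolding b_def by (cases "q = L - 1") auto
  ultimately show False using xs(2) ab unfolding L_def by (metis nth_eq_iff_index_eq)
qed

locale parent_pointers =
  fixes V :: "nat set" and par :: "nat \<Rightarrow> nat"
  assumes finite: "finite V" and root: "0 \<in> V"
    and parent: "\<And>v. v \<in> V \<Longrightarrow> v \<noteq> 0 \<Longrightarrow> par v < v \<and> par v \<in> V"
begin

lemma parent_edge_cases:
  assumes "parent_graph V par u v" shows "(u = par v \<and> u < v) \<or> (v = par u \<and> v < u)"
proof -
  have "u \<in> V" "v \<in> V" "(v \<noteq> 0 \<and> u = par v) \<or> (u \<noteq> 0 \<and> v = par u)"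
    using assms unfolding parent_graph_def by blast+
  then show ?thesis using parent[of u] parent[of v] by blast
qed

lemma path_to_root:
  "v \<in> V \<Longrightarrow> (\<lambda>x y. parent_graph V par x y \<and> x \<in> V \<and> y \<in> V)\<^sup>*\<^sup>* v 0"
proof (induction v rule: less_induct)
  case (less v)
  let ?R = "\<lambda>x y. parent_graph V par x y \<and> x \<in> V \<and> y \<in> V"
  show ?case
  proof (cases "v = 0")
    case False
    then have up: "par v \<in> V" "par v < v" using parent less.prems by auto
    then have "?R v (par v)" unfolding parent_graph_def using less.prems False by blast
    moreover have "?R\<^sup>*\<^sup>* (par v) 0" using less.IH up by blast
    ultimately show ?thesis by (rule converse_rtranclp_into_rtranclp)
  qed simp
qed

theorem parent_graph_tree: "is_tree V (parent_graph V par)"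
proof -
  let ?T = "parent_graph V par"
  have "\<not> ?T v v" for v using parent_edge_cases[of v v] by blast
  moreover have "?T u v \<Longrightarrow> ?T v u" for u v unfolding parent_graph_def by blast
  ultimately have "simple_graph V ?T"
    unfolding simple_graph_def using finite by (auto simp: parent_graph_def)
  moreover have "connected_graph V ?T"
    unfolding connected_graph_def
  proof (intro ballI)
    fix u v assume uv: "u \<in> V" "v \<in> V"
    let ?R = "\<lambda>x y. ?T x y \<and> x \<in> V \<and> y \<in> V"
    have "?R\<inverse>\<inverse> = ?R" unfolding parent_graph_def by (intro ext) blast
    then have "?R\<^sup>*\<^sup>* 0 v" using rtranclp_converseI[OF path_to_root[OF uv(2)]] by simp
    then show "?R\<^sup>*\<^sup>* u v" using path_to_root[OF uv(1)] by (rule rtranclp_trans[rotated])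
  qed
  moreover have "\<not> has_cycle V ?T" using no_cycle_parent_edges parent_edge_cases by blast
  ultimately show ?thesis unfolding is_tree_def using root by blast
qed

lemma parent_graph_degree:
  assumes "v \<in> V"
  shows "degree V (parent_graph V par) v \<le> (if v = 0 then 0 else 1) + card {u\<in>V. u \<noteq> 0 \<and> par u = v}"
proof -
  let ?up = "if v = 0 then {} else {par v}"
  have "{u\<in>V. parent_graph V par v u} \<subseteq> ?up \<union> {u\<in>V. u \<noteq> 0 \<and> par u = v}"
    unfolding parent_graph_def by auto
  then have "degree V (parent_graph V par) v \<le> card (?up \<union> {u\<in>V. u \<noteq> 0 \<and> par u = v})"
    unfolding degree_def using finite by (intro card_mono) auto
  also have "\<dots> \<le> card ?up + card {u\<in>V. u \<noteq> 0 \<and> par u = v}" by (rule card_Un_le)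
  finally show ?thesis by (cases "v = 0") simp_all
qed

end

section \<open>Lower bound: a \<open>k\<close>-colouring gives a representation in a tree of degree \<open>k\<close>\<close>

text \<open>Given a proper colouring \<open>c\<close> of G with colours \<open>< k\<close>, the host tree has root \<open>0\<close>, a spine
  \<open>spine a 0, \<dots>, spine a (n - 1)\<close> hanging from the root for each colour \<open>a\<close>, and for each vertex
  \<open>i\<close> of G a leaf attached to \<open>spine (c i) i\<close>.\<close>
locale spine_tree = base_graph +
  fixes k :: nat and c :: "nat \<Rightarrow> nat"
  assumes three_colours: "k \<ge> 3" and colour_range: "\<And>i. i < n \<Longrightarrow> c i < k"
    and colour_proper: "\<And>u v. E u v \<Longrightarrow> c u \<noteq> c v"
begin

definition spine :: "nat \<Rightarrow> nat \<Rightarrow> nat" where "spine a i = Suc (a * n + i)"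
definition leaf :: "nat \<Rightarrow> nat" where "leaf i = Suc (k * n + i)"
definition host_V :: "nat set" where "host_V = {..k * n + n}"
definition host_par :: "nat \<Rightarrow> nat" where
  "host_par v = (if v \<le> k * n then (if (v - 1) mod n = 0 then 0 else v - 1)
                 else spine (c (v - Suc (k * n))) (v - Suc (k * n)))"

abbreviation host_E :: "nat \<Rightarrow> nat \<Rightarrow> bool" where "host_E \<equiv> parent_graph host_V host_par"

lemma n_pos: "n > 0" using two_vertices by simp

lemma spine_le: "a < k \<Longrightarrow> i < n \<Longrightarrow> spine a i \<le> k * n"
proof -
  assume "a < k" "i < n"
  then have "a * n + n \<le> k * n" by (metis add.commute mult_Suc mult_le_mono1 Suc_leI)
  then show ?thesis unfolding spine_def using \<open>i < n\<close> by linarith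
qed

lemma spine_nonzero: "spine a i \<noteq> 0" unfolding spine_def by simp

lemma spine_inj: "i < n \<Longrightarrow> j < n \<Longrightarrow> spine a i = spine b j \<Longrightarrow> a = b \<and> i = j"
proof -
  assume h: "i < n" "j < n" "spine a i = spine b j"
  then have e: "a * n + i = b * n + j" unfolding spine_def by simp
  have "(a * n + i) div n = a" "(b * n + j) div n = b" using h n_pos by auto
  moreover have "(a * n + i) mod n = i" "(b * n + j) mod n = j" using h by auto
  ultimately show ?thesis using e by metis
qed

lemma leaf_gt: "leaf i > k * n" unfolding leaf_def by simp

lemma spine_in_host: "a < k \<Longrightarrow> i < n \<Longrightarrow> spine a i \<in> host_V"
  and leaf_in_host: "i < n \<Longrightarrow> leaf i \<in> host_V"
  using spine_le unfolding host_V_def leaf_def by fastforce+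

lemma host_vertex_cases:
  assumes "v \<in> host_V"
  obtains (root) "v = 0" | (spine) a i where "a < k" "i < n" "v = spine a i"
    | (leaf) i where "i < n" "v = leaf i"
proof -
  consider "v = 0" | "v \<noteq> 0" "v \<le> k * n" | "v > k * n" by linarith
  then show thesis
  proof cases
    case 2
    have "v - 1 = (v - 1) div n * n + (v - 1) mod n" by simp
    moreover have "(v - 1) div n < k" using 2 n_pos by (simp add: less_mult_imp_div_less)
    ultimately show thesis using spine[of "(v - 1) div n" "(v - 1) mod n"] 2 n_pos
      unfolding spine_def by simp
  next
    case 3
    then show thesis using leaf[of "v - Suc (k * n)"] assms
      unfolding host_V_def leaf_def by auto
  qed (rule root)
qed

lemma par_spine_Suc: "a < k \<Longrightarrow> Suc i < n \<Longrightarrow> host_par (spine a (Suc i)) = spine a i"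
  using spine_le[of a "Suc i"] unfolding host_par_def by (simp add: spine_def)

lemma par_spine_0: "a < k \<Longrightarrow> host_par (spine a 0) = 0"
  using spine_le[OF _ n_pos] unfolding host_par_def by (simp add: spine_def)

lemma par_leaf: "host_par (leaf i) = spine (c i) i"
  unfolding host_par_def leaf_def by simp

lemma par_spine_cases:
  assumes "a < k" "i < n"
  shows "host_par (spine a i) = 0 \<and> i = 0 \<or> (\<exists>i'. i = Suc i' \<and> host_par (spine a i) = spine a i')"
  using assms par_spine_0 par_spine_Suc by (cases i) auto

text \<open>Parents are never leaves.\<close>
lemma par_le: assumes "u \<in> host_V" "u \<noteq> 0" shows "host_par u \<le> k * n"
  using assms(1)
proof (cases rule: host_vertex_cases)
  case (spine a i)
  then show ?thesis using par_spine_cases[OF spine(1,2)] spine_le[OF spine(1)] by auto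
next
  case (leaf i)
  then show ?thesis using par_leaf spine_le colour_range by simp
qed (use assms in simp)

sublocale host: parent_pointers host_V host_par
proof
  show "finite host_V" "0 \<in> host_V" unfolding host_V_def by auto
  fix v assume v: "v \<in> host_V" "v \<noteq> 0"
  then show "host_par v < v \<and> host_par v \<in> host_V"
  proof (cases rule: host_vertex_cases)
    case (spine a i)
    then show ?thesis using par_spine_cases[OF spine(1,2)]
      by (auto simp: spine_def host_V_def dest: spine_in_host)
  next
    case (leaf i)
    then show ?thesis using par_le[OF v] leaf_gt[of i] spine_in_host colour_range par_leaf by auto
  qed simp
qed

lemma host_tree: "is_tree host_V host_E"
  by (rule host.parent_graph_tree)

lemma children_root: "{u\<in>host_V. u \<noteq> 0 \<and> host_par u = 0} \<subseteq> (\<lambda>a. spine a 0) ` {..<k}"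
proof
  fix u assume u: "u \<in> {u\<in>host_V. u \<noteq> 0 \<and> host_par u = 0}"
  then have "u \<in> host_V" by blast
  then show "u \<in> (\<lambda>a. spine a 0) ` {..<k}"
  proof (cases rule: host_vertex_cases)
    case (spine a i)
    then show ?thesis using u par_spine_cases[OF spine(1,2)] spine_nonzero by auto
  next
    case (leaf i)
    then show ?thesis using u par_leaf spine_nonzero by auto
  qed (use u in simp)
qed

lemma children_spine:
  assumes "a < k" "i < n"
  shows "{u\<in>host_V. u \<noteq> 0 \<and> host_par u = spine a i} \<subseteq> {spine a (Suc i), leaf i}"
proof
  fix u assume u: "u \<in> {u\<in>host_V. u \<noteq> 0 \<and> host_par u = spine a i}"
  then have "u \<in> host_V" by blast
  then show "u \<in> {spine a (Suc i), leaf i}"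
  proof (cases rule: host_vertex_cases)
    case (spine b j)
    from par_spine_cases[OF spine(1,2)] show ?thesis
    proof
      assume "host_par (spine b j) = 0 \<and> j = 0"
      then show ?thesis using u spine spine_nonzero[of a i] by auto
    next
      assume "\<exists>j'. j = Suc j' \<and> host_par (spine b j) = spine b j'"
      then obtain j' where j': "j = Suc j'" "host_par (spine b j) = spine b j'" by blast
      then have "b = a \<and> j' = i" using u spine spine_inj[of j' i b a] assms by auto
      then show ?thesis using spine j' by simp
    qed
  next
    case (leaf j)
    then show ?thesis using u par_leaf spine_inj[OF _ assms(2)] by auto
  qed (use u in simp)
qed

lemma children_leaf: "{u\<in>host_V. u \<noteq> 0 \<and> host_par u = leaf i} = {}"
  using par_le leaf_gt[of i] by fastforce

lemma host_degree: "\<forall>v\<in>host_V. degree host_V host_E v \<le> k"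
proof
  fix v assume v: "v \<in> host_V"
  note deg = host.parent_graph_degree[OF v]
  from v show "degree host_V host_E v \<le> k"
  proof (cases rule: host_vertex_cases)
    case root
    have "card {u\<in>host_V. u \<noteq> 0 \<and> host_par u = 0} \<le> card ((\<lambda>a. spine a 0) ` {..<k})"
      using children_root by (intro card_mono) auto
    also have "\<dots> \<le> k" using card_image_le[of "{..<k}"] by simp
    finally show ?thesis using deg root by simp
  next
    case (spine a i)
    have "card {u\<in>host_V. u \<noteq> 0 \<and> host_par u = spine a i} \<le> card {spine a (Suc i), leaf i}"
      using children_spine[OF spine(1,2)] by (intro card_mono) auto
    also have "\<dots> \<le> 2" by (simp add: card_insert_if)
    finally show ?thesis using deg spine spine_nonzero three_colours by simp
  next
    case (leaf i)
    have "card {u\<in>host_V. u \<noteq> 0 \<and> host_par u = v} = 0"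
      by (simp only: leaf(2) children_leaf card.empty)
    moreover have "v \<noteq> 0" using leaf by (simp add: leaf_def)
    ultimately show ?thesis using deg three_colours by simp
  qed
qed


sublocale host_tree: tree host_V host_E
  by (rule tree.intro[OF host_tree])

definition descent :: "nat \<Rightarrow> nat \<Rightarrow> nat list" where
  "descent a i = map (spine a) (rev [0..<Suc i]) @ [0]"

definition leaf_path :: "nat \<Rightarrow> nat list" where
  "leaf_path i = leaf i # descent (c i) i"

fun host_path :: "hat_vertex \<Rightarrow> nat set" where
  "host_path (HP i) = {leaf i}"
| "host_path (HPQ i) = set (leaf_path i)"
| "host_path (HPE i j) = set (leaf_path i) \<union> set (leaf_path j)"

lemma set_descent: "set (descent a i) = insert 0 (spine a ` {..i})"
proof -
  have "set (rev [0..<Suc i]) = {..i}" by auto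
  then show ?thesis unfolding descent_def by auto
qed

lemma descent_walk: "a < k \<Longrightarrow> i < n \<Longrightarrow> successively host_E (descent a i)"
proof (induction i)
  case 0
  have "host_E (spine a 0) 0"
    unfolding parent_graph_def using par_spine_0[OF 0(1)] spine_in_host[OF 0(1) n_pos]
      host.root spine_nonzero by auto
  then show ?case by (simp add: descent_def)
next
  case (Suc i)
  have "host_E (spine a (Suc i)) (spine a i)"
    unfolding parent_graph_def using par_spine_Suc[OF Suc.prems] spine_in_host Suc.prems
      spine_nonzero by auto
  moreover have "descent a (Suc i) = spine a (Suc i) # descent a i" "hd (descent a i) = spine a i"
    unfolding descent_def by simp_all
  ultimately show ?case using Suc by (simp add: successively_Cons)
qed

lemma descent_distinct: "distinct (descent a i)"
proof -
  have "distinct (map (spine a) (rev [0..<Suc i]))"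
    by (auto simp: distinct_map inj_on_def spine_def)
  moreover have "0 \<notin> spine a ` {..i}" by (auto simp: spine_def)
  ultimately show ?thesis unfolding descent_def by auto
qed

lemma leaf_notin_descent:
  assumes "a < k" "i < n" shows "leaf j \<notin> set (descent a i)"
proof
  assume "leaf j \<in> set (descent a i)"
  then obtain t where "t \<le> i" "leaf j = spine a t"
    unfolding set_descent by (auto simp: leaf_def)
  then show False using spine_le[OF assms(1), of t] assms(2) leaf_gt[of j] by simp
qed

lemma leaf_path_tpath: assumes "i < n" shows "host_tree.tpath (leaf_path i)"
proof -
  have ci: "c i < k" using colour_range assms by blast
  have "distinct (leaf_path i)"
    unfolding leaf_path_def using descent_distinct leaf_notin_descent[OF ci assms] by simp
  moreover have "set (leaf_path i) \<subseteq> host_V"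
    using leaf_in_host assms spine_in_host[OF ci] host.root
    by (auto simp: leaf_path_def set_descent)
  moreover have "host_E (leaf i) (spine (c i) i)"
    unfolding parent_graph_def using par_leaf leaf_in_host spine_in_host[OF ci] assms leaf_gt[of i]
    by auto
  then have "successively host_E (leaf_path i)"
    unfolding leaf_path_def using descent_walk[OF ci assms]
    by (simp add: successively_Cons descent_def)
  ultimately show ?thesis unfolding host_tree.tpath_def leaf_path_def by simp
qed

lemma leaf_in_leaf_path: "i < n \<Longrightarrow> j < n \<Longrightarrow> leaf i \<in> set (leaf_path j) \<longleftrightarrow> i = j"
  unfolding leaf_path_def using leaf_notin_descent[OF colour_range] by (auto simp: leaf_def)

lemma root_in_leaf_path: "0 \<in> set (leaf_path j)" and last_leaf_path: "last (leaf_path j) = 0"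
  unfolding leaf_path_def descent_def by simp_all

lemma leaf_paths_meet_at_root:
  assumes "i < n" "j < n" "c i \<noteq> c j" shows "set (leaf_path i) \<inter> set (leaf_path j) \<subseteq> {0}"
proof
  fix x assume x: "x \<in> set (leaf_path i) \<inter> set (leaf_path j)"
  have "x \<noteq> leaf i" "x \<noteq> leaf j" using x leaf_in_leaf_path assms by blast+
  then have "x \<in> set (descent (c i) i)" "x \<in> set (descent (c j) j)"
    using x unfolding leaf_path_def by auto
  then show "x \<in> {0}"
    using spine_inj[of _ _ "c i" "c j"] assms unfolding set_descent by fastforce
qed

lemma host_path_is_path:
  assumes "x \<in> hat_V n E" shows "is_path_set host_V host_E (host_path x)"
proof -
  have "\<exists>xs. host_tree.tpath xs \<and> host_path x = set xs"
    using assms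
  proof (cases rule: hat_V_cases)
    case (leaf i)
    then have "host_tree.tpath [leaf i]" unfolding host_tree.tpath_def using leaf_in_host by simp
    then show ?thesis using leaf by (intro exI[of _ "[leaf i]"]) simp
  next
    case (pendant i)
    then show ?thesis using leaf_path_tpath by (intro exI[of _ "leaf_path i"]) simp
  next
    case (edge i j)
    have ij: "i < n" "j < n" "c i \<noteq> c j" using edge colour_proper by auto
    let ?back = "rev (leaf_path j)"
    have reversed: "host_tree.tpath ?back" "hd ?back = 0"
      using leaf_path_tpath[OF ij(2)] host_tree.tpath_rev last_leaf_path
      by (auto simp: hd_rev)
    then have "host_tree.tpath (leaf_path i @ tl ?back)"
      using host_tree.tpath_join(1)[OF leaf_path_tpath[OF ij(1)]] last_leaf_path
        leaf_paths_meet_at_root[OF ij] by simp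
    moreover have "set ?back = insert 0 (set (tl ?back))"
      using reversed(2) by (metis list.collapse list.simps(15) rev_is_Nil_conv leaf_path_def
          list.distinct(1))
    then have "set (leaf_path i @ tl ?back) = set (leaf_path i) \<union> set (leaf_path j)"
      using root_in_leaf_path[of i] by auto
    ultimately show ?thesis using edge by (intro exI[of _ "leaf_path i @ tl ?back"]) simp
  qed
  then show ?thesis unfolding is_path_set_def host_tree.tpath_iff_walk by blast
qed

lemma root_in_host_path: "\<not> is_leaf_path x \<Longrightarrow> 0 \<in> host_path x"
  by (cases x) (auto simp: is_leaf_path_def root_in_leaf_path)

lemma hat_adj_leaf_iff:
  assumes "i < n" "y \<in> hat_V n E" "y \<noteq> HP i"
  shows "hat_adj (HP i) y \<longleftrightarrow> leaf i \<in> host_path y"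
  using assms(2)
  by (cases rule: hat_V_cases) (use assms leaf_in_leaf_path in \<open>auto simp: leaf_def\<close>)

lemma host_path_intersection:
  assumes "x \<in> hat_V n E" "y \<in> hat_V n E" "x \<noteq> y"
  shows "hat_adj x y \<longleftrightarrow> host_path x \<inter> host_path y \<noteq> {}"
proof (cases "is_leaf_path x")
  case True
  obtain i where i: "x = HP i" "i < n"
    using assms(1) True by (cases rule: hat_V_cases) (auto simp: is_leaf_path_def)
  then show ?thesis using hat_adj_leaf_iff[OF i(2) assms(2)] assms(3) by auto
next
  case x: False
  show ?thesis
  proof (cases "is_leaf_path y")
    case True
    obtain i where i: "y = HP i" "i < n"
      using assms(2) True by (cases rule: hat_V_cases) (auto simp: is_leaf_path_def)
    then show ?thesis using hat_adj_leaf_iff[OF i(2) assms(1)] assms(3) hat_adj_sym by auto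
  next
    case False
    then show ?thesis using hat_adj_centre[OF x False assms(3)] root_in_host_path x by blast
  qed
qed

theorem spine_representation: "in_VPT_class k (hat_V n E) hat_adj"
  unfolding in_VPT_class_def
  using host_tree host_degree host_path_is_path host_path_intersection by blast

end

corollary representation_from_colouring:
  assumes "base_graph n E" "k \<ge> 3" "chromatic_number {..<n} E \<le> k"
  shows "in_VPT_class k (hat_V n E) hat_adj"
proof -
  obtain c where c: "\<forall>v\<in>{..<n}. c v < chromatic_number {..<n} E"
    "\<forall>u\<in>{..<n}. \<forall>v\<in>{..<n}. E u v \<longrightarrow> c u \<noteq> c v"
    using chromatic_colouring_exists base_graph.adj_irrefl[OF assms(1)] by blast
  interpret spine_tree n E k c
  proof (intro spine_tree.intro[OF assms(1)] spine_tree_axioms.intro)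
    show "3 \<le> k" by fact
    show "\<And>i. i < n \<Longrightarrow> c i < k" using c(1) assms(3) by (meson lessThan_iff less_le_trans)
    show "\<And>u v. E u v \<Longrightarrow> c u \<noteq> c v" using c(2) base_graph.adj_range[OF assms(1)] by blast
  qed
  show ?thesis by (rule spine_representation)
qed

theorem claim2:
  fixes n h :: nat and E :: "nat \<Rightarrow> nat \<Rightarrow> bool"
  assumes "n \<ge> 2"
    and "simple_graph {..<n} E"
    and "connected_graph {..<n} E"
    and "h \<ge> 4"
  shows "(in_VPT_class h (hat_V n E) hat_adj \<and> \<not> in_VPT_class (h - 1) (hat_V n E) hat_adj)
         \<longleftrightarrow> chromatic_number {..<n} E = h"
proof -
  have G: "base_graph n E" using assms(1-3) by unfold_locales
  have "3 \<le> h - 1" using assms(4) by simp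
  then have realisable: "in_VPT_class k (hat_V n E) hat_adj \<longleftrightarrow> chromatic_number {..<n} E \<le> k"
    if "k \<in> {h - 1, h}" for k
    using that assms(4) chromatic_number_upper_bound[OF G] representation_from_colouring[OF G]
    by auto
  show ?thesis using realisable[of h] realisable[of "h - 1"] assms(4) by auto
qed

end
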